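(* Assume a common outcome monotonic cost $c$ for both groups, with likelihood cost $c_L$ differentiable in its first argument and satisfying the likelihood condition: $\partial c_L(l,\tau)/\partial l$ is monotonically non-increasing in $\tau$ for $l,\tau\in[0,1]$. If group $b$ is disadvantaged in features compared to group $a$, then for thresholds $\tau\in(0,1]$ the social gap $\mathcal G(\tau)$ is positive and monotonically (strictly) increasing in $\tau$.
   Context: Individuals have features $x\in\mathcal X$, label $y\in\{0,1\}$ and group $g\in\{a,b\}$, with $(X,Y,G)$ jointly distributed. Outcome likelihood $\ell(x)=\Pr[Y=1\mid X=x]>0$ for all $x$. Outcome monotonic cost $c$: for all $x,x',x^*$, (i) $c(x,x')>0$ iff $\ell(x')>\ell(x)$; (ii) $c(x,x^* )>c(x',x^* )>0$ iff $\ell(x^* )>\ell(x')>\ell(x)$; (iii) $c(x,x^* )>c(x,x')>0$ iff $\ell(x^* )>\ell(x')>\ell(x)$; such a cost can be written $c(x,x')=c_L(\ell(x),\ell(x'))$ for a function $c_L$ on likelihoods. Threshold classifier $f_\tau(x)=\mathbf 1[\ell(x)\ge\tau]$. Group social burden $\mathcal B_g(\tau)=\mathbb E[\min_{x':f_\tau(x')=1}c(X,x')\mid Y=1,G=g]$; social gap $\mathcal G(\tau)=\mathcal B_b(\tau)-\mathcal B_a(\tau)$. Let $L_g$ be the random variable $\ell(X)$ conditional on $Y=1,G=g$, with CDF $F_g$. Group $b$ is disadvantaged in features if $F_b(l)>F_a(l)$ for all $l\in(0,1)$. *)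

theory Defs
  imports "HOL-Probability.Probability"
begin

text \<open>Features live in the type 'x; lik is the outcome likelihood Pr[Y=1 | X=x].\<close>

definition outcome_monotonic :: "('x \<Rightarrow> real) \<Rightarrow> ('x \<Rightarrow> 'x \<Rightarrow> real) \<Rightarrow> bool" where
  "outcome_monotonic lik c \<longleftrightarrow>
     (\<forall>x x'. c x x' > 0 \<longleftrightarrow> lik x' > lik x) \<and>
     (\<forall>x x' xs. (c x xs > c x' xs \<and> c x' xs > 0) \<longleftrightarrow> (lik xs > lik x' \<and> lik x' > lik x)) \<and>
     (\<forall>x x' xs. (c x xs > c x x' \<and> c x x' > 0) \<longleftrightarrow> (lik xs > lik x' \<and> lik x' > lik x))"

definition thr_clf :: "('x \<Rightarrow> real) \<Rightarrow> real \<Rightarrow> 'x \<Rightarrow> bool" where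
  "thr_clf lik \<tau> x \<longleftrightarrow> lik x \<ge> \<tau>"

definition min_cost :: "('x \<Rightarrow> real) \<Rightarrow> ('x \<Rightarrow> 'x \<Rightarrow> real) \<Rightarrow> real \<Rightarrow> 'x \<Rightarrow> real" where
  "min_cost lik c \<tau> x = (INF x'\<in>{x'. thr_clf lik \<tau> x'}. c x x')"

text \<open>Social burden of a group, where M is the distribution of X conditional on Y=1, G=g.\<close>
definition burden :: "'x measure \<Rightarrow> ('x \<Rightarrow> real) \<Rightarrow> ('x \<Rightarrow> 'x \<Rightarrow> real) \<Rightarrow> real \<Rightarrow> real" where
  "burden M lik c \<tau> = (\<integral>x. min_cost lik c \<tau> x \<partial>M)"

definition social_gap :: "'x measure \<Rightarrow> 'x measure \<Rightarrow> ('x \<Rightarrow> real) \<Rightarrow> ('x \<Rightarrow> 'x \<Rightarrow> real) \<Rightarrow> real \<Rightarrow> real" where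
  "social_gap Ma Mb lik c \<tau> = burden Mb lik c \<tau> - burden Ma lik c \<tau>"

text \<open>CDF of L_g = l(X) conditional on Y=1, G=g.\<close>
definition lik_cdf :: "'x measure \<Rightarrow> ('x \<Rightarrow> real) \<Rightarrow> real \<Rightarrow> real" where
  "lik_cdf M lik l = measure M {x \<in> space M. lik x \<le> l}"

end

theory Submission
  imports Defs
begin

text \<open>Because the likelihood attains every threshold \<open>\<tau>\<close>, the cheapest way to be accepted by
\<open>f\<^sub>\<tau>\<close> is to move to a feature with likelihood exactly \<open>\<tau>\<close>; hence the burden of a group is
\<open>E[c\<^sub>L(L, \<tau>)]\<close>. For fixed \<open>\<tau>\<close> the map \<open>l \<mapsto> c\<^sub>L(l, \<tau>)\<close> is continuous, nonincreasing and not
constant on \<open>(0,1]\<close>, and by the likelihood condition the same holds for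
\<open>l \<mapsto> c\<^sub>L(l, \<tau>\<^sub>2) - c\<^sub>L(l, \<tau>\<^sub>1)\<close> when \<open>\<tau>\<^sub>1 < \<tau>\<^sub>2\<close>. Both claims therefore reduce to strict
first-order stochastic dominance: if \<open>F\<^sub>b > F\<^sub>a\<close> on \<open>(0,1)\<close>, then \<open>E\<^sub>b \<phi>(L) > E\<^sub>a \<phi>(L)\<close> for every
such \<open>\<phi>\<close>. This follows from the layer-cake formula, since every nontrivial superlevel set of
\<open>\<phi>\<close> is an interval \<open>(0, s]\<close> and so has probability \<open>F\<^sub>g(s)\<close>.\<close>

section \<open>Layer-cake representation\<close>

lemma nn_integral_superlevel_indicator:
  fixes h :: "'a \<Rightarrow> real"
  assumes [measurable]: "h \<in> borel_measurable M"
  shows "(\<integral>\<^sup>+x. indicator {0<..} t * indicator {x. t \<le> h x} x \<partial>M) =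
     indicator {0<..} t * emeasure M {x\<in>space M. t \<le> h x}"
proof -
  have "(\<integral>\<^sup>+x. indicator {0<..} t * indicator {x. t \<le> h x} x \<partial>M) =
      (\<integral>\<^sup>+x. indicator {0<..} t * indicator {x\<in>space M. t \<le> h x} x \<partial>M)"
    by (rule nn_integral_cong) (simp add: indicator_def)
  also have "\<dots> = indicator {0<..} t * emeasure M {x\<in>space M. t \<le> h x}"
    by (rule nn_integral_cmult_indicator) measurable
  finally show ?thesis .
qed

lemma borel_measurable_emeasure_superlevel:
  fixes h :: "'a \<Rightarrow> real"
  assumes "sigma_finite_measure M" and [measurable]: "h \<in> borel_measurable M"
  shows "(\<lambda>t. indicator {0<..} t * emeasure M {x\<in>space M. t \<le> h x}) \<in> borel_measurable borel"
proof -
  interpret sigma_finite_measure M by fact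
  have "(\<lambda>t. \<integral>\<^sup>+x. indicator {0<..} t * indicator {x. t \<le> h x} x \<partial>M) \<in> borel_measurable lborel"
    by (rule borel_measurable_nn_integral) measurable
  then show ?thesis by (simp add: nn_integral_superlevel_indicator[OF \<open>h \<in> borel_measurable M\<close>])
qed

lemma nn_integral_layer_cake:
  fixes h :: "'a \<Rightarrow> real"
  assumes "sigma_finite_measure M" and [measurable]: "h \<in> borel_measurable M"
    and nonneg: "\<And>x. x \<in> space M \<Longrightarrow> 0 \<le> h x"
  shows "(\<integral>\<^sup>+x. ennreal (h x) \<partial>M) =
         (\<integral>\<^sup>+t. indicator {0<..} t * emeasure M {x\<in>space M. t \<le> h x} \<partial>lborel)"
proof -
  interpret M: sigma_finite_measure M by fact
  interpret pair_sigma_finite M lborel ..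
  have "(\<integral>\<^sup>+x. ennreal (h x) \<partial>M) =
      (\<integral>\<^sup>+x. \<integral>\<^sup>+t. indicator {0<..} t * indicator {x. t \<le> h x} x \<partial>lborel \<partial>M)"
  proof (rule nn_integral_cong)
    fix x assume "x \<in> space M"
    have "(\<integral>\<^sup>+t. indicator {0<..} t * indicator {x. t \<le> h x} x \<partial>lborel) =
        (\<integral>\<^sup>+t. indicator {0<..h x} t \<partial>lborel)"
      by (rule nn_integral_cong) (simp add: indicator_def)
    also have "\<dots> = ennreal (h x)" using nonneg[OF \<open>x \<in> space M\<close>] by simp
    finally show "ennreal (h x) = (\<integral>\<^sup>+t. indicator {0<..} t * indicator {x. t \<le> h x} x \<partial>lborel)" ..
  qed
  also have "\<dots> = (\<integral>\<^sup>+t. \<integral>\<^sup>+x. indicator {0<..} t * indicator {x. t \<le> h x} x \<partial>M \<partial>lborel)"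
    by (rule Fubini'[symmetric]) measurable
  finally show ?thesis by (simp add: nn_integral_superlevel_indicator[OF \<open>h \<in> borel_measurable M\<close>])
qed

lemma integral_eq_nn_integral_superlevel:
  fixes h :: "'a \<Rightarrow> real"
  assumes "sigma_finite_measure M" and "integrable M h" and nonneg: "\<And>x. x \<in> space M \<Longrightarrow> 0 \<le> h x"
  shows "ennreal (\<integral>x. h x \<partial>M) =
         (\<integral>\<^sup>+t. indicator {0<..} t * emeasure M {x\<in>space M. t \<le> h x} \<partial>lborel)"
proof -
  have "ennreal (\<integral>x. h x \<partial>M) = (\<integral>\<^sup>+x. ennreal (h x) \<partial>M)"
    using assms by (intro nn_integral_eq_integral[symmetric]) auto
  also have "\<dots> = (\<integral>\<^sup>+t. indicator {0<..} t * emeasure M {x\<in>space M. t \<le> h x} \<partial>lborel)"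
    using assms by (intro nn_integral_layer_cake) auto
  finally show ?thesis .
qed

lemma integral_less_of_superlevel_less:
  fixes h :: "'a \<Rightarrow> real"
  assumes M: "sigma_finite_measure M" and N: "sigma_finite_measure N"
    and hM: "integrable M h" and hN: "integrable N h"
    and nonneg: "\<And>x. 0 \<le> h x"
    and le: "\<And>t. 0 < t \<Longrightarrow> emeasure M {x\<in>space M. t \<le> h x} \<le> emeasure N {x\<in>space N. t \<le> h x}"
    and less: "\<And>t. 0 < t \<Longrightarrow> t \<le> b \<Longrightarrow> emeasure M {x\<in>space M. t \<le> h x} < emeasure N {x\<in>space N. t \<le> h x}"
    and "0 < b"
  shows "(\<integral>x. h x \<partial>M) < (\<integral>x. h x \<partial>N)"
proof -
  define P where "P K t = indicator {0<..} t * emeasure K {x\<in>space K. t \<le> h x}" for K t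
  have layer_cake: "ennreal (\<integral>x. h x \<partial>K) = (\<integral>\<^sup>+t. P K t \<partial>lborel)"
    if "sigma_finite_measure K" "integrable K h" for K
    unfolding P_def using that nonneg by (intro integral_eq_nn_integral_superlevel)
  have "(\<integral>\<^sup>+t. P M t \<partial>lborel) < (\<integral>\<^sup>+t. P N t \<partial>lborel)"
  proof (rule nn_integral_less)
    show "P M \<in> borel_measurable lborel" "P N \<in> borel_measurable lborel"
      unfolding P_def
      using borel_measurable_emeasure_superlevel[OF M borel_measurable_integrable[OF hM]]
        borel_measurable_emeasure_superlevel[OF N borel_measurable_integrable[OF hN]]
      by simp_all
    show "(\<integral>\<^sup>+t. P M t \<partial>lborel) \<noteq> \<infinity>"
      using layer_cake[OF M hM] by (metis ennreal_neq_top infinity_ennreal_def)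
    show "AE t in lborel. P M t \<le> P N t"
      using le by (intro AE_I2) (auto simp: P_def indicator_def)
    show "\<not> (AE t in lborel. P N t \<le> P M t)"
    proof
      assume "AE t in lborel. P N t \<le> P M t"
      then obtain Z where Z: "{t \<in> space lborel. \<not> P N t \<le> P M t} \<subseteq> Z" "emeasure lborel Z = 0" "Z \<in> sets lborel"
        by (rule AE_E)
      have "{0<..b} \<subseteq> Z" using Z(1) less by (force simp: P_def not_le)
      then have "emeasure lborel {0<..b} \<le> emeasure lborel Z" by (intro emeasure_mono Z(3))
      then show False using Z(2) \<open>0 < b\<close> by simp
    qed
  qed
  then have "ennreal (\<integral>x. h x \<partial>M) < ennreal (\<integral>x. h x \<partial>N)"
    using layer_cake[OF M hM] layer_cake[OF N hN] by simp
  then show ?thesis using nonneg by (simp add: ennreal_less_iff)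
qed

section \<open>Stochastic dominance\<close>

lemma integrable_continuous_comp_compact:
  fixes X :: "'a \<Rightarrow> real" and \<phi> :: "real \<Rightarrow> real"
  assumes "finite_measure M" and X: "X \<in> borel_measurable M"
    and range: "\<And>x. x \<in> space M \<Longrightarrow> X x \<in> K" and "compact K" and cont: "continuous_on K \<phi>"
  shows "integrable M (\<lambda>x. \<phi> (X x))"
proof -
  interpret finite_measure M by fact
  have "X \<in> measurable M (restrict_space borel K)"
    using range X by (intro measurable_restrict_space2) auto
  then have meas: "(\<lambda>x. \<phi> (X x)) \<in> borel_measurable M"
    using measurable_comp[OF _ borel_measurable_continuous_on_restrict[OF cont]] by (simp add: comp_def)
  obtain B where B: "\<And>y. y \<in> K \<Longrightarrow> norm (\<phi> y) \<le> B"
    using compact_imp_bounded[OF compact_continuous_image[OF cont \<open>compact K\<close>]]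
    by (auto simp: bounded_iff)
  show ?thesis
    by (rule integrable_const_bound[where B = B]) (use meas B range in auto)
qed

lemma superlevel_set_of_antimono_eq_Ioc:
  fixes \<psi> :: "real \<Rightarrow> real"
  assumes cont: "continuous_on {0<..1} \<psi>"
    and anti: "\<And>l l'. 0 < l \<Longrightarrow> l \<le> l' \<Longrightarrow> l' \<le> 1 \<Longrightarrow> \<psi> l' \<le> \<psi> l"
    and "\<psi> 1 < t" and "l0 \<in> {0<..1}" and "t \<le> \<psi> l0"
  obtains s where "s \<in> {0<..<1}" "\<And>l. l \<in> {0<..1} \<Longrightarrow> t \<le> \<psi> l \<longleftrightarrow> l \<le> s"
proof -
  define S where "S = {0<..1} \<inter> \<psi> -` {t..}"
  define s where "s = Sup S"
  have "l0 \<in> S" using assms(4,5) by (auto simp: S_def)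
  moreover have bdd: "bdd_above S" by (auto simp: S_def bdd_above_def)
  ultimately have "l0 \<le> s" and s_closure: "s \<in> closure S"
    unfolding s_def by (auto intro: cSup_upper closure_contains_Sup)
  have "s \<le> 1" unfolding s_def using \<open>l0 \<in> S\<close> by (intro cSup_least) (auto simp: S_def)
  have "closedin (top_of_set {0<..1}) S"
    unfolding S_def by (rule continuous_closedin_preimage[OF cont closed_atLeast])
  then obtain T where "closed T" and S_eq: "S = {0<..1} \<inter> T" by (auto simp: closedin_closed)
  then have "closure S \<subseteq> T" by (intro closure_minimal) auto
  with s_closure have "s \<in> T" by blast
  with S_eq \<open>l0 \<le> s\<close> \<open>s \<le> 1\<close> assms(4) have "s \<in> S" by auto
  hence "s \<noteq> 1" using assms(3) by (auto simp: S_def)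
  show thesis
  proof
    show "s \<in> {0<..<1}" using \<open>s \<in> S\<close> \<open>s \<noteq> 1\<close> by (auto simp: S_def)
    fix l :: real assume "l \<in> {0<..1}"
    show "t \<le> \<psi> l \<longleftrightarrow> l \<le> s"
    proof
      assume "t \<le> \<psi> l"
      with \<open>l \<in> {0<..1}\<close> have "l \<in> S" by (simp add: S_def)
      then show "l \<le> s" unfolding s_def using bdd by (rule cSup_upper)
    next
      assume "l \<le> s"
      then show "t \<le> \<psi> l" using \<open>l \<in> {0<..1}\<close> \<open>s \<in> S\<close> anti[of l s] by (auto simp: S_def)
    qed
  qed
qed

lemma emeasure_superlevel_less_of_cdf_less:
  fixes lik :: "'x \<Rightarrow> real" and \<psi> :: "real \<Rightarrow> real"
  assumes "prob_space Ma" "prob_space Mb"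
    and range: "\<forall>x. 0 < lik x \<and> lik x \<le> 1"
    and cdf_less: "\<forall>l\<in>{0<..<1}. lik_cdf Mb lik l > lik_cdf Ma lik l"
    and cont: "continuous_on {0<..1} \<psi>"
    and anti: "\<And>l l'. 0 < l \<Longrightarrow> l \<le> l' \<Longrightarrow> l' \<le> 1 \<Longrightarrow> \<psi> l' \<le> \<psi> l"
    and "\<psi> 1 < t" and "l0 \<in> {0<..1}" and "t \<le> \<psi> l0"
  shows "emeasure Ma {x\<in>space Ma. t \<le> \<psi> (lik x)} < emeasure Mb {x\<in>space Mb. t \<le> \<psi> (lik x)}"
proof -
  interpret A: prob_space Ma by fact
  interpret B: prob_space Mb by fact
  obtain s where "s \<in> {0<..<1}" and superlevel: "\<And>l. l \<in> {0<..1} \<Longrightarrow> t \<le> \<psi> l \<longleftrightarrow> l \<le> s"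
    using superlevel_set_of_antimono_eq_Ioc[OF cont anti assms(7-9)] by blast
  have "\<And>x. t \<le> \<psi> (lik x) \<longleftrightarrow> lik x \<le> s" using superlevel range by simp
  then have "emeasure Ma {x\<in>space Ma. t \<le> \<psi> (lik x)} = ennreal (lik_cdf Ma lik s)"
      "emeasure Mb {x\<in>space Mb. t \<le> \<psi> (lik x)} = ennreal (lik_cdf Mb lik s)"
    by (simp_all add: lik_cdf_def A.emeasure_eq_measure B.emeasure_eq_measure)
  moreover have "lik_cdf Ma lik s < lik_cdf Mb lik s" using cdf_less \<open>s \<in> {0<..<1}\<close> by simp
  ultimately show ?thesis by (simp add: lik_cdf_def ennreal_less_iff)
qed

lemma integral_antimono_less_of_cdf_less:
  fixes lik :: "'x \<Rightarrow> real" and \<phi> :: "real \<Rightarrow> real"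
  assumes Ma: "prob_space Ma" and Mb: "prob_space Mb"
    and "lik \<in> borel_measurable Ma" "lik \<in> borel_measurable Mb"
    and range: "\<forall>x. 0 < lik x \<and> lik x \<le> 1"
    and cdf_less: "\<forall>l\<in>{0<..<1}. lik_cdf Mb lik l > lik_cdf Ma lik l"
    and cont: "continuous_on {0..1} \<phi>"
    and anti: "\<And>l l'. 0 < l \<Longrightarrow> l \<le> l' \<Longrightarrow> l' \<le> 1 \<Longrightarrow> \<phi> l' \<le> \<phi> l"
    and "l0 \<in> {0<..1}" and nonconst: "\<phi> 1 < \<phi> l0"
  shows "(\<integral>x. \<phi> (lik x) \<partial>Ma) < (\<integral>x. \<phi> (lik x) \<partial>Mb)"
proof -
  define \<psi> where "\<psi> l = \<phi> l - \<phi> 1" for l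
  have cont_\<psi>: "continuous_on {0<..1} \<psi>" unfolding \<psi>_def
    by (intro continuous_intros continuous_on_subset[OF cont]) auto
  have anti_\<psi>: "\<And>l l'. 0 < l \<Longrightarrow> l \<le> l' \<Longrightarrow> l' \<le> 1 \<Longrightarrow> \<psi> l' \<le> \<psi> l"
    unfolding \<psi>_def using anti by fastforce
  have nonneg: "\<And>x. 0 \<le> \<psi> (lik x)" using anti_\<psi>[of "lik x" 1 for x] range by (simp add: \<psi>_def)
  have integrable: "integrable M (\<lambda>x. \<phi> (lik x))"
    if "prob_space M" "lik \<in> borel_measurable M" for M
    using that range by (intro integrable_continuous_comp_compact[OF _ _ _ compact_Icc cont])
      (auto simp: prob_space.finite_measure less_imp_le)
  have integral_\<psi>: "integrable M (\<lambda>x. \<psi> (lik x)) \<and>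
      (\<integral>x. \<psi> (lik x) \<partial>M) = (\<integral>x. \<phi> (lik x) \<partial>M) - \<phi> 1"
    if "prob_space M" "lik \<in> borel_measurable M" for M
  proof -
    interpret prob_space M by fact
    show ?thesis using integrable[OF that] by (simp add: \<psi>_def prob_space)
  qed
  have superlevel_less: "emeasure Ma {x\<in>space Ma. t \<le> \<psi> (lik x)} < emeasure Mb {x\<in>space Mb. t \<le> \<psi> (lik x)}"
    if "0 < t" "l1 \<in> {0<..1}" "t \<le> \<psi> l1" for t l1
    using emeasure_superlevel_less_of_cdf_less[OF Ma Mb range cdf_less cont_\<psi> anti_\<psi> _ that(2,3)] that(1)
    by (simp add: \<psi>_def)
  have "(\<integral>x. \<psi> (lik x) \<partial>Ma) < (\<integral>x. \<psi> (lik x) \<partial>Mb)"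
  proof (rule integral_less_of_superlevel_less)
    show "emeasure Ma {x\<in>space Ma. t \<le> \<psi> (lik x)} \<le> emeasure Mb {x\<in>space Mb. t \<le> \<psi> (lik x)}"
      if "0 < t" for t
    proof (cases "\<exists>l\<in>{0<..1}. t \<le> \<psi> l")
      case True
      then obtain l1 where "l1 \<in> {0<..1}" "t \<le> \<psi> l1" by blast
      then show ?thesis using less_imp_le[OF superlevel_less[OF that]] by blast
    next
      case False
      then show ?thesis using range by auto
    qed
    show "emeasure Ma {x\<in>space Ma. t \<le> \<psi> (lik x)} < emeasure Mb {x\<in>space Mb. t \<le> \<psi> (lik x)}"
      if "0 < t" "t \<le> \<psi> l0" for t
      using superlevel_less that \<open>l0 \<in> _\<close> by blast
    show "0 < \<psi> l0" using nonconst by (simp add: \<psi>_def)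
  qed (use integral_\<psi> assms(1-4) nonneg in \<open>simp_all add: prob_space_imp_sigma_finite\<close>)
  then show ?thesis using integral_\<psi>[OF Ma] integral_\<psi>[OF Mb] assms(3,4) by simp
qed

section \<open>Likelihood costs\<close>

lemma antimono_diff_of_derivative_le:
  fixes f g f' g' :: "real \<Rightarrow> real"
  assumes f: "\<And>l. l \<in> {a..b} \<Longrightarrow> (f has_real_derivative f' l) (at l within {a..b})"
    and g: "\<And>l. l \<in> {a..b} \<Longrightarrow> (g has_real_derivative g' l) (at l within {a..b})"
    and le: "\<And>l. l \<in> {a<..<b} \<Longrightarrow> f' l \<le> g' l"
    and "a \<le> l" "l \<le> l'" "l' \<le> b"
  shows "f l' - g l' \<le> f l - g l"
proof (rule DERIV_nonpos_imp_decreasing_open[OF \<open>l \<le> l'\<close>])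
  fix y assume "l < y" "y < l'"
  with assms(4-6) have "y \<in> {a<..<b}" by auto
  then have "((\<lambda>u. f u - g u) has_real_derivative f' y - g' y) (at y)"
    using f[of y] g[of y] by (intro DERIV_diff) (auto simp: at_within_Icc_at)
  with le[OF \<open>y \<in> {a<..<b}\<close>] show "\<exists>D. ((\<lambda>u. f u - g u) has_real_derivative D) (at y) \<and> D \<le> 0"
    by auto
next
  have "continuous_on {a..b} (\<lambda>u. f u - g u)"
    using DERIV_continuous_on[OF f] DERIV_continuous_on[OF g] by (intro continuous_intros)
  then show "continuous_on {l..l'} (\<lambda>u. f u - g u)"
    by (rule continuous_on_subset) (use assms(4-6) in auto)
qed

lemma min_cost_eq_cost_to_level:
  assumes "outcome_monotonic lik c" and nonneg: "\<forall>x x'. 0 \<le> c x x'" and "lik xs = \<tau>"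
  shows "min_cost lik c \<tau> x = c x xs"
  unfolding min_cost_def thr_clf_def
proof (rule antisym)
  show "(INF x'\<in>{x'. \<tau> \<le> lik x'}. c x x') \<le> c x xs"
    using nonneg \<open>lik xs = \<tau>\<close> by (intro cINF_lower) (auto simp: bdd_below_def)
  have "c x xs \<le> c x x'" if "\<tau> \<le> lik x'" for x'
  proof (cases "\<tau> \<le> lik x \<or> lik x' = \<tau>")
    case True
    then show ?thesis
      using assms that unfolding outcome_monotonic_def by (metis nonneg not_less order.trans)
  next
    case False
    then show ?thesis
      using assms that unfolding outcome_monotonic_def by (metis less_eq_real_def not_less)
  qed
  then show "c x xs \<le> (INF x'\<in>{x'. \<tau> \<le> lik x'}. c x x')"
    using \<open>lik xs = \<tau>\<close> by (intro cINF_greatest) auto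
qed

locale likelihood_cost =
  fixes lik :: "'x \<Rightarrow> real" and c :: "'x \<Rightarrow> 'x \<Rightarrow> real" and cL :: "real \<Rightarrow> real \<Rightarrow> real"
  assumes lik_rich: "\<forall>\<tau>\<in>{0<..1}. \<exists>x. lik x = \<tau>"
    and cost_nonneg: "\<forall>x x'. 0 \<le> c x x'"
    and mono: "outcome_monotonic lik c"
    and cL: "\<forall>x x'. c x x' = cL (lik x) (lik x')"
begin

definition level :: "real \<Rightarrow> 'x" where
  "level \<tau> = (SOME x. lik x = \<tau>)"

lemma lik_level: "\<tau> \<in> {0<..1} \<Longrightarrow> lik (level \<tau>) = \<tau>"
  unfolding level_def using lik_rich by (metis (mono_tags) someI_ex)

lemma cL_eq_cost_level: "l \<in> {0<..1} \<Longrightarrow> \<tau> \<in> {0<..1} \<Longrightarrow> cL l \<tau> = c (level l) (level \<tau>)"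
  using cL by (simp add: lik_level)

lemma cL_eq_0: "l \<in> {0<..1} \<Longrightarrow> \<tau> \<in> {0<..1} \<Longrightarrow> \<tau> \<le> l \<Longrightarrow> cL l \<tau> = 0"
  using mono cost_nonneg unfolding outcome_monotonic_def
  by (metis cL_eq_cost_level lik_level not_less order.antisym)

lemma cL_pos: "l \<in> {0<..1} \<Longrightarrow> \<tau> \<in> {0<..1} \<Longrightarrow> l < \<tau> \<Longrightarrow> 0 < cL l \<tau>"
  using mono unfolding outcome_monotonic_def by (simp add: cL_eq_cost_level lik_level)

lemma cL_strict_antimono:
  assumes "0 < l" "l < l'" "l' < \<tau>" "\<tau> \<le> 1"
  shows "cL l' \<tau> < cL l \<tau>"
proof -
  have "lik (level \<tau>) > lik (level l') \<and> lik (level l') > lik (level l)"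
    using assms by (simp add: lik_level)
  then have "c (level l) (level \<tau>) > c (level l') (level \<tau>)"
    using mono unfolding outcome_monotonic_def by blast
  then show ?thesis using assms by (simp add: cL_eq_cost_level)
qed

lemma cL_antimono:
  assumes "\<tau> \<in> {0<..1}" "0 < l" "l \<le> l'" "l' \<le> 1"
  shows "cL l' \<tau> \<le> cL l \<tau>"
proof (cases "\<tau> \<le> l'")
  case True
  then show ?thesis
    using assms cL_eq_0[of l' \<tau>] cost_nonneg cL_eq_cost_level[of l \<tau>] by auto
next
  case False
  then show ?thesis using assms cL_strict_antimono[of l l' \<tau>] by (cases "l = l'") auto
qed

lemma min_cost_eq_cL: "\<tau> \<in> {0<..1} \<Longrightarrow> min_cost lik c \<tau> = (\<lambda>x. cL (lik x) \<tau>)"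
  using min_cost_eq_cost_to_level[OF mono cost_nonneg lik_level] cL lik_level by fastforce

end

locale social_gap_setting = likelihood_cost lik c cL
  for lik :: "'x \<Rightarrow> real" and c cL +
  fixes cL' :: "real \<Rightarrow> real \<Rightarrow> real" and Ma Mb :: "'x measure"
  assumes lik_range: "\<forall>x. 0 < lik x \<and> lik x \<le> 1"
    and prob_a: "prob_space Ma" and prob_b: "prob_space Mb"
    and meas_a: "lik \<in> borel_measurable Ma" and meas_b: "lik \<in> borel_measurable Mb"
    and cL_deriv: "\<forall>l\<in>{0..1}. \<forall>\<tau>\<in>{0..1}.
                     ((\<lambda>u. cL u \<tau>) has_real_derivative cL' l \<tau>) (at l within {0..1})"
    and lik_cond: "\<forall>l\<in>{0..1}. \<forall>\<tau>1\<in>{0..1}. \<forall>\<tau>2\<in>{0..1}. \<tau>1 \<le> \<tau>2 \<longrightarrow> cL' l \<tau>2 \<le> cL' l \<tau>1"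
    and disadv: "\<forall>l\<in>{0<..<1}. lik_cdf Mb lik l > lik_cdf Ma lik l"
begin

lemma continuous_on_cL: "\<tau> \<in> {0..1} \<Longrightarrow> continuous_on {0..1} (\<lambda>u. cL u \<tau>)"
  using cL_deriv by (intro DERIV_continuous_on) blast

lemma integrable_cL:
  assumes "prob_space M" "lik \<in> borel_measurable M" "\<tau> \<in> {0..1}"
  shows "integrable M (\<lambda>x. cL (lik x) \<tau>)"
  using assms lik_range continuous_on_cL[OF assms(3)]
  by (intro integrable_continuous_comp_compact[OF prob_space.finite_measure _ _ compact_Icc])
    (auto simp: less_imp_le)

lemma social_gap_eq:
  "\<tau> \<in> {0<..1} \<Longrightarrow>
     social_gap Ma Mb lik c \<tau> = (\<integral>x. cL (lik x) \<tau> \<partial>Mb) - (\<integral>x. cL (lik x) \<tau> \<partial>Ma)"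
  unfolding social_gap_def burden_def by (simp add: min_cost_eq_cL)

lemma integral_less_of_antimono:
  fixes \<phi> :: "real \<Rightarrow> real"
  assumes "continuous_on {0..1} \<phi>"
    and "\<And>l l'. 0 < l \<Longrightarrow> l \<le> l' \<Longrightarrow> l' \<le> 1 \<Longrightarrow> \<phi> l' \<le> \<phi> l"
    and "l0 \<in> {0<..1}" "\<phi> 1 < \<phi> l0"
  shows "(\<integral>x. \<phi> (lik x) \<partial>Ma) < (\<integral>x. \<phi> (lik x) \<partial>Mb)"
  using prob_a prob_b meas_a meas_b lik_range disadv assms by (rule integral_antimono_less_of_cdf_less)

lemma social_gap_pos: "\<tau> \<in> {0<..1} \<Longrightarrow> social_gap Ma Mb lik c \<tau> > 0"
  using integral_less_of_antimono[of "\<lambda>u. cL u \<tau>" "\<tau> / 2"]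
    continuous_on_cL cL_antimono cL_eq_0[of 1 \<tau>] cL_pos[of "\<tau> / 2" \<tau>]
  by (auto simp: social_gap_eq)

lemma social_gap_strict_mono: "strict_mono_on {0<..1} (social_gap Ma Mb lik c)"
proof (rule strict_mono_onI)
  fix \<tau>1 \<tau>2 :: real assume \<tau>: "\<tau>1 \<in> {0<..1}" "\<tau>2 \<in> {0<..1}" "\<tau>1 < \<tau>2"
  define \<phi> where "\<phi> l = cL l \<tau>2 - cL l \<tau>1" for l
  have "(\<integral>x. \<phi> (lik x) \<partial>Ma) < (\<integral>x. \<phi> (lik x) \<partial>Mb)"
  proof (rule integral_less_of_antimono)
    show "continuous_on {0..1} \<phi>"
      unfolding \<phi>_def using \<tau> by (intro continuous_intros continuous_on_cL) auto
    show "\<phi> l' \<le> \<phi> l" if "0 < l" "l \<le> l'" "l' \<le> 1" for l l'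
      unfolding \<phi>_def using cL_deriv lik_cond \<tau> that
      by (intro antimono_diff_of_derivative_le[of 0 1 "\<lambda>u. cL u \<tau>2" "\<lambda>l. cL' l \<tau>2" "\<lambda>u. cL u \<tau>1" "\<lambda>l. cL' l \<tau>1"]) auto
    show "\<phi> 1 < \<phi> \<tau>1"
      unfolding \<phi>_def using cL_eq_0[of 1 \<tau>1] cL_eq_0[of 1 \<tau>2] cL_eq_0[of \<tau>1 \<tau>1] cL_pos[of \<tau>1 \<tau>2] \<tau>
      by auto
  qed (use \<tau> in auto)
  moreover have "(\<integral>x. \<phi> (lik x) \<partial>M) = (\<integral>x. cL (lik x) \<tau>2 \<partial>M) - (\<integral>x. cL (lik x) \<tau>1 \<partial>M)"
    if "prob_space M" "lik \<in> borel_measurable M" for M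
    unfolding \<phi>_def using \<tau> by (intro Bochner_Integration.integral_diff integrable_cL[OF that]) auto
  ultimately show "social_gap Ma Mb lik c \<tau>1 < social_gap Ma Mb lik c \<tau>2"
    using prob_a prob_b meas_a meas_b \<tau> by (simp add: social_gap_eq)
qed

end

theorem theorem2:
  fixes lik :: "'x \<Rightarrow> real"
    and c :: "'x \<Rightarrow> 'x \<Rightarrow> real"
    and cL cL' :: "real \<Rightarrow> real \<Rightarrow> real"
    and Ma Mb :: "'x measure"
  assumes lik_range: "\<forall>x. 0 < lik x \<and> lik x \<le> 1"
    and lik_rich: "\<forall>\<tau>\<in>{0<..1}. \<exists>x. lik x = \<tau>"
    and prob_a: "prob_space Ma" and prob_b: "prob_space Mb"
    and meas_a: "lik \<in> borel_measurable Ma" and meas_b: "lik \<in> borel_measurable Mb"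
    and cost_nonneg: "\<forall>x x'. 0 \<le> c x x'"
    and mono: "outcome_monotonic lik c"
    and cL: "\<forall>x x'. c x x' = cL (lik x) (lik x')"
    and cL_deriv: "\<forall>l\<in>{0..1}. \<forall>\<tau>\<in>{0..1}.
                     ((\<lambda>u. cL u \<tau>) has_real_derivative cL' l \<tau>) (at l within {0..1})"
    and lik_cond: "\<forall>l\<in>{0..1}. \<forall>\<tau>1\<in>{0..1}. \<forall>\<tau>2\<in>{0..1}. \<tau>1 \<le> \<tau>2 \<longrightarrow> cL' l \<tau>2 \<le> cL' l \<tau>1"
    and disadv: "\<forall>l\<in>{0<..<1}. lik_cdf Mb lik l > lik_cdf Ma lik l"
  shows "(\<forall>\<tau>\<in>{0<..1}. social_gap Ma Mb lik c \<tau> > 0) \<and>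
         strict_mono_on {0<..1} (social_gap Ma Mb lik c)"
proof -
  interpret social_gap_setting lik c cL cL' Ma Mb
    using assms by (intro social_gap_setting.intro likelihood_cost.intro social_gap_setting_axioms.intro)
  show ?thesis using social_gap_pos social_gap_strict_mono by blast
qed

end
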